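(* Let $B$ be the $3\times 2$ integer matrix of rank two \[ B = \begin{bmatrix} \phantom{-\lambda} r & \phantom{-\lambda} s \\ -\lambda r & -\lambda s \\ \phantom{-\lambda} a & \phantom{-\lambda} b \end{bmatrix} \] where $r, s, a, b$ are positive integers, $a \leq b$, $r \geq s$, $\gcd(r,s)=d$, and $0<\lambda = p/q$ in lowest terms (so that $q$ divides $r$ and $s$, since $\lambda r,\lambda s$ are integers), and set $M = \left[ \begin{smallmatrix} r/q & s/q \\ a & b \end{smallmatrix} \right]$. Given $\ell \in \mathbb{N}$, let $\phi_\ell : \mathbb{N}^2 \to \mathbb{Z}^3$ be the injective map $(w,k) \mapsto (qw, \lambda(q\ell - qw), k) = (qw, p(\ell - w), k)$. Then the image under $\phi_\ell$ of the band graph $G_\ell(M)$ is the slice graph $G_{S(q\ell)}(B)$.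
   Context: Notation: $\mathbb{N}=\{0,1,2,\dots\}$. For a subset $Q\subseteq \mathbb{Z}^n$ and an $n\times m$ integer matrix $M$, $G_Q(M)$ is the graph whose vertices are the elements of $Q$, with two vertices $u,v\in Q$ joined by an edge if and only if $u-v$ or $v-u$ is a column of $M$. For a rank two $2\times 2$ integer matrix $M$ with all entries positive and $\ell\in\mathbb{N}$, the band graph is $G_\ell(M) = G_{Q_\ell}(M)$ with $Q_\ell = \{u \in \mathbb{N}^2 \mid u_1 \leq \ell\}$. For $B$ as in the claim and $\ell$, the slice $S(\ell)$ is $\mathbb{N}^3 \cap \{(u_x,u_y,u_z) \mid u_y = -\lambda u_x + \lambda \ell\}$, and $G_{S(\ell)}(B)$ is the $\ell$th slice graph of $B$. The image $\phi_\ell(\{(w,k)\in\mathbb{N}^2 \mid 0\le w\le \ell\})$ is exactly the intersection with $\mathbb{N}^3$ of the hyperplane $u_y=-\lambda u_x+\lambda q\ell$. *)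

theory Defs
  imports Complex_Main "HOL-Library.Product_Plus"
begin

text \<open>The graph G_Q(M): vertices Q, and an (undirected, stored symmetrically) edge
  between u and v iff u - v or v - u is a column of M. A matrix is represented
  by the set of its columns C.\<close>
definition col_graph :: "'a::minus set \<Rightarrow> 'a set \<Rightarrow> 'a set \<times> ('a \<times> 'a) set" where
  "col_graph Q C = (Q, {(u, v). u \<in> Q \<and> v \<in> Q \<and> (u - v \<in> C \<or> v - u \<in> C)})"

definition graph_image :: "('a \<Rightarrow> 'b) \<Rightarrow> 'a set \<times> ('a \<times> 'a) set \<Rightarrow> 'b set \<times> ('b \<times> 'b) set" where
  "graph_image f G = (f ` fst G, (\<lambda>(u, v). (f u, f v)) ` snd G)"

definition Q_band :: "nat \<Rightarrow> (int \<times> int) set" where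
  "Q_band l = {(u1, u2). 0 \<le> u1 \<and> 0 \<le> u2 \<and> u1 \<le> int l}"

definition band_graph :: "nat \<Rightarrow> (int \<times> int) set \<Rightarrow> (int \<times> int) set \<times> ((int \<times> int) \<times> (int \<times> int)) set" where
  "band_graph l C = col_graph (Q_band l) C"

definition slice :: "rat \<Rightarrow> nat \<Rightarrow> (int \<times> int \<times> int) set" where
  "slice lam l = {(ux, uy, uz). 0 \<le> ux \<and> 0 \<le> uy \<and> 0 \<le> uz \<and>
      of_int uy = - lam * of_int ux + lam * of_nat l}"

definition slice_graph :: "rat \<Rightarrow> nat \<Rightarrow> (int \<times> int \<times> int) set \<Rightarrow> _" where
  "slice_graph lam l C = col_graph (slice lam l) C"

end

theory Submission
  imports Defs
begin

text \<open>The map \<open>(w, k) \<mapsto> (q w, p (l - w), k)\<close> is affine with injective linear part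
  \<open>(w, k) \<mapsto> (q w, -p w, k)\<close>, which carries the columns of \<open>M\<close> onto those of \<open>B\<close>; so it
  preserves and reflects edges. It remains to see that it maps the band \<open>0 \<le> w \<le> l\<close>
  onto the slice: a point of the slice satisfies \<open>q u\<^sub>y = p (q l - u\<^sub>x)\<close>, and as
  \<open>p, q\<close> are coprime, \<open>q\<close> divides \<open>u\<^sub>x\<close>.\<close>

lemma graph_image_col_graph:
  assumes "f ` Q = Q'"
    and "\<And>x y. x \<in> Q \<Longrightarrow> y \<in> Q \<Longrightarrow> f x - f y \<in> C' \<longleftrightarrow> x - y \<in> C"
  shows "graph_image f (col_graph Q C) = col_graph Q' C'"
proof -
  have "(\<lambda>(u, v). (f u, f v)) ` {(u, v). u \<in> Q \<and> v \<in> Q \<and> (u - v \<in> C \<or> v - u \<in> C)}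
        = {(u, v). u \<in> Q' \<and> v \<in> Q' \<and> (u - v \<in> C' \<or> v - u \<in> C')}"
  proof (intro equalityI subsetI)
    fix z assume "z \<in> (\<lambda>(u, v). (f u, f v)) ` {(u, v). u \<in> Q \<and> v \<in> Q \<and> (u - v \<in> C \<or> v - u \<in> C)}"
    then obtain x y where "z = (f x, f y)" "x \<in> Q" "y \<in> Q" "x - y \<in> C \<or> y - x \<in> C"
      by auto
    then show "z \<in> {(u, v). u \<in> Q' \<and> v \<in> Q' \<and> (u - v \<in> C' \<or> v - u \<in> C')}"
      using assms by auto
  next
    fix z assume "z \<in> {(u, v). u \<in> Q' \<and> v \<in> Q' \<and> (u - v \<in> C' \<or> v - u \<in> C')}"
    then obtain x y where "z = (f x, f y)" "x \<in> Q" "y \<in> Q" "f x - f y \<in> C' \<or> f y - f x \<in> C'"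
      using assms(1) by blast
    then show "z \<in> (\<lambda>(u, v). (f u, f v)) ` {(u, v). u \<in> Q \<and> v \<in> Q \<and> (u - v \<in> C \<or> v - u \<in> C)}"
      using assms(2) by (auto intro!: image_eqI[where x = "(x, y)"])
  qed
  then show ?thesis
    using assms(1) unfolding graph_image_def col_graph_def by simp
qed

lemma graph_image_col_graph_affine:
  assumes "f ` Q = Q'" and "inj g" and "\<And>x y. f x - f y = g (x - y)"
  shows "graph_image f (col_graph Q C) = col_graph Q' (g ` C)"
  using assms by (intro graph_image_col_graph) (auto simp: inj_image_mem_iff)

lemma mem_slice_iff:
  fixes p q :: int
  assumes "q > 0"
  shows "(ux, uy, uz) \<in> slice (of_int p / of_int q) (nat q * l) \<longleftrightarrow>
           0 \<le> ux \<and> 0 \<le> uy \<and> 0 \<le> uz \<and> q * uy = p * (q * int l - ux)"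
proof -
  have "(of_int uy :: rat) = - (of_int p / of_int q) * of_int ux + of_int p / of_int q * of_nat (nat q * l)
        \<longleftrightarrow> (of_int (q * uy) :: rat) = of_int (p * (q * int l - ux))"
    using assms by (simp add: field_simps)
  then show ?thesis
    unfolding slice_def of_int_eq_iff by simp
qed

lemma image_Q_band_eq_slice:
  fixes p q :: int
  assumes "p > 0" "q > 0" "coprime p q"
  shows "(\<lambda>(w, k). (q * w, p * (int l - w), k)) ` Q_band l = slice (of_int p / of_int q) (nat q * l)"
proof (intro equalityI subsetI)
  fix z assume "z \<in> (\<lambda>(w, k). (q * w, p * (int l - w), k)) ` Q_band l"
  then obtain w k where "z = (q * w, p * (int l - w), k)" "0 \<le> w" "0 \<le> k" "w \<le> int l"
    unfolding Q_band_def by auto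
  then show "z \<in> slice (of_int p / of_int q) (nat q * l)"
    using assms by (simp only: mem_slice_iff) (simp add: algebra_simps)
next
  fix z assume "z \<in> slice (of_int p / of_int q) (nat q * l)"
  then obtain ux uy uz where z: "z = (ux, uy, uz)" and nonneg: "0 \<le> ux" "0 \<le> uy" "0 \<le> uz"
    and line: "q * uy = p * (q * int l - ux)"
    using assms(2) by (cases z) (auto simp: mem_slice_iff)
  have "p * ux = q * (p * int l - uy)"
    using line by (simp add: algebra_simps)
  then have "q dvd ux"
    using assms(3) by (metis coprime_commute coprime_dvd_mult_right_iff dvd_triv_left)
  then obtain w where w: "ux = q * w" ..
  have "q * uy = q * (p * (int l - w))"
    using line w by (simp add: algebra_simps)
  then have uy: "uy = p * (int l - w)"
    using assms(2) by simp
  have "0 \<le> w" "w \<le> int l"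
    using nonneg w uy assms(1,2) by (simp_all add: zero_le_mult_iff)
  then show "z \<in> (\<lambda>(w, k). (q * w, p * (int l - w), k)) ` Q_band l"
    using z w uy nonneg(3) unfolding Q_band_def by (auto intro!: image_eqI[where x = "(w, uz)"])
qed

theorem lemma4p5:
  fixes r s a b d p q :: int and l :: nat
  assumes pos: "r > 0" "s > 0" "a > 0" "b > 0"
    and ab: "a \<le> b" and rs: "r \<ge> s" and dgcd: "d = gcd r s"
    and pq: "p > 0" "q > 0" "coprime p q"
    and Bint: "q dvd p * r" "q dvd p * s"
    and rankB: "\<forall>x y :: rat. x * of_int r + y * of_int s = 0
                 \<and> x * of_int (- (p * r div q)) + y * of_int (- (p * s div q)) = 0
                 \<and> x * of_int a + y * of_int b = 0 \<longrightarrow> x = 0 \<and> y = 0"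
  shows "graph_image (\<lambda>(w, k). (q * w, p * (int l - w), k))
           (band_graph l {(r div q, a), (s div q, b)})
         = slice_graph (of_int p / of_int q) (nat q * l)
             {(r, - (p * r div q), a), (s, - (p * s div q), b)}"
proof -
  define g :: "int \<times> int \<Rightarrow> int \<times> int \<times> int" where "g = (\<lambda>(w, k). (q * w, - p * w, k))"
  have "q dvd r" "q dvd s"
    using Bint pq(3) by (metis coprime_commute coprime_dvd_mult_right_iff)+
  then obtain r' s' where "r = q * r'" "s = q * s'"
    by (elim dvdE)
  then have columns: "{(r, - (p * r div q), a), (s, - (p * s div q), b)} = g ` {(r div q, a), (s div q, b)}"
    using pq(2) unfolding g_def by simp
  have "inj g"
    using pq(2) unfolding g_def by (auto intro!: injI)
  moreover have "(\<lambda>(w, k). (q * w, p * (int l - w), k)) x - (\<lambda>(w, k). (q * w, p * (int l - w), k)) y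
                 = g (x - y)" for x y
    unfolding g_def by (cases x, cases y) (simp add: algebra_simps)
  ultimately show ?thesis
    unfolding band_graph_def slice_graph_def columns
    by (rule graph_image_col_graph_affine[OF image_Q_band_eq_slice[OF pq]])
qed

end
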